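(* Let $p$ be a prime, $\Phi:\mathbb{N}\to\mathbb{N}$ strictly increasing, and $f\in\mathcal{F}(\Phi)$. Let $h,n_0,u$ be nonnegative integers with $u<p^{1+\Phi(n_0)}$ and $f(u)\equiv 0\pmod{p^{1+h+n_0}}$. Suppose there is a sequence $(S(n))_{n\ge n_0}$ of sets of integers with $S(n)\subset\big(0,p^{\Phi(n+1)-\Phi(n)}\big)$ and $\operatorname{Card} S(n)=p-1$, such that for all nonnegative integers $n,m$ with $n\ge n_0$, $m<p^{1+\Phi(n)}$ and $m\equiv u\pmod{p^{1+\Phi(n_0)}}$, \[ \big\{\, b(\Phi,f;m+ip^{1+\Phi(n)}) \bmod p^{h+1} \;:\; i\in S(n)\,\big\} = \big\{\, ip^h \bmod p^{h+1} \;:\; i=1,2,\dots,p-1\,\big\}. \] Then there exists $\xi\in\mathbb{Z}_p$ such that (a) $f(\xi)=0$, (b) $\xi\equiv u\pmod{p^{1+\Phi(n_0)}}$, and (c) $\rho(\xi;n+1)\in\{0\}\cup S(n)$ for every $n\ge n_0$. If moreover $b(\Phi,f;m)\equiv 0\pmod{p^h}$ for every integer $m\ge p^{1+\Phi(n_0)}$ with $m\equiv u\pmod{p^{1+\Phi(n_0)}}$, then the $\xi\in\mathbb{Z}_p$ satisfying (a), (b), (c) is unique.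
   Context: $\mathbb{N}=\{0,1,2,\dots\}$. $v_p$, $|\cdot|_p$ are the $p$-adic valuation and absolute value ($v_p(p)=1$, $|p|_p=p^{-1}$). Each $x\in\mathbb{Z}_p$ is written $x=\sum_{i\ge0}x_ip^i$ with digits $x_i\in\{0,\dots,p-1\}$; for a nonnegative integer $m$, $m_i$ are its base-$p$ digits. Set $\Phi(-1):=-1$. $\tau(m)=\tau(\Phi;m):=\min\{h\in\mathbb{N}: m<p^{1+\Phi(h)}\}$. For $m\ge p^{1+\Phi(0)}$, $M(m):=\sum_{i=\Phi(\tau(m)-1)+1}^{\Phi(\tau(m))} m_ip^i$. $B(\Phi,f;m):=f(m)$ if $m<p^{1+\Phi(0)}$ and $B(\Phi,f;m):=f(m)-f(m-M(m))$ otherwise. $\mathcal{F}(\Phi)$ is the class of continuous $f:\mathbb{Z}_p\to\mathbb{Z}_p$ such that for every positive integer $n$ and all $x,y\in\mathbb{Z}_p$: if $|x-y|_p\le p^{-1-\Phi(n-1)}$ then $|f(x)-f(y)|_p\le p^{-n}$. For $f\in\mathcal{F}(\Phi)$ one has $v_p(B(\Phi,f;m))\ge\tau(m)$, and one sets $b(\Phi,f;m):=p^{-\tau(m)}B(\Phi,f;m)\in\mathbb{Z}_p$. For $x\in\mathbb{Z}_p$ and $j\in\mathbb{N}$, $\rho(x;j):=p^{-1-\Phi(j-1)}\sum_{i=1+\Phi(j-1)}^{\Phi(j)}x_ip^i$ (a nonnegative integer). *)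

theory Defs
  imports "HOL-Computational_Algebra.Primes"
begin

text \<open>p-adic integers, represented as compatible sequences of residues:
  x k is the residue of x modulo p^k, in [0, p^k).\<close>

definition zp :: "nat \<Rightarrow> (nat \<Rightarrow> int) set" where
  "zp p = {x. \<forall>k. 0 \<le> x k \<and> x k < int p ^ k \<and> x (Suc k) mod int p ^ k = x k}"

definition zp_of_int :: "nat \<Rightarrow> int \<Rightarrow> (nat \<Rightarrow> int)" where
  "zp_of_int p m = (\<lambda>k. m mod int p ^ k)"

definition zp_zero :: "nat \<Rightarrow> int" where
  "zp_zero = (\<lambda>k. 0)"

definition zp_sub :: "nat \<Rightarrow> (nat \<Rightarrow> int) \<Rightarrow> (nat \<Rightarrow> int) \<Rightarrow> (nat \<Rightarrow> int)" where
  "zp_sub p x y = (\<lambda>k. (x k - y k) mod int p ^ k)"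

text \<open>Division by p^t (exact when v_p(x) \<ge> t).\<close>
definition zp_shift :: "nat \<Rightarrow> nat \<Rightarrow> (nat \<Rightarrow> int) \<Rightarrow> (nat \<Rightarrow> int)" where
  "zp_shift p t x = (\<lambda>k. x (k + t) div int p ^ t)"

definition zp_digit :: "nat \<Rightarrow> (nat \<Rightarrow> int) \<Rightarrow> nat \<Rightarrow> nat" where
  "zp_digit p x i = nat (x (Suc i) div int p ^ i)"

definition nat_digit :: "nat \<Rightarrow> nat \<Rightarrow> nat \<Rightarrow> nat" where
  "nat_digit p m i = m div p ^ i mod p"

text \<open>Continuity of f : Z_p \<rightarrow> Z_p in the p-adic topology
  (|x-y|_p \<le> p^{-l} iff x l = y l).\<close>
definition zp_continuous :: "nat \<Rightarrow> ((nat \<Rightarrow> int) \<Rightarrow> (nat \<Rightarrow> int)) \<Rightarrow> bool" where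
  "zp_continuous p f \<longleftrightarrow>
     (\<forall>x\<in>zp p. \<forall>k. \<exists>l. \<forall>y\<in>zp p. x l = y l \<longrightarrow> f x k = f y k)"

definition classF :: "nat \<Rightarrow> (nat \<Rightarrow> nat) \<Rightarrow> ((nat \<Rightarrow> int) \<Rightarrow> (nat \<Rightarrow> int)) \<Rightarrow> bool" where
  "classF p \<Phi> f \<longleftrightarrow> (\<forall>x\<in>zp p. f x \<in> zp p) \<and> zp_continuous p f \<and>
     (\<forall>n>0. \<forall>x\<in>zp p. \<forall>y\<in>zp p.
        x (1 + \<Phi> (n - 1)) = y (1 + \<Phi> (n - 1)) \<longrightarrow> f x n = f y n)"

definition tau :: "nat \<Rightarrow> (nat \<Rightarrow> nat) \<Rightarrow> nat \<Rightarrow> nat" where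
  "tau p \<Phi> m = (LEAST h. m < p ^ (1 + \<Phi> h))"

text \<open>M(m), used only for m \<ge> p^(1+Phi 0), where tau m \<ge> 1.\<close>
definition Mfun :: "nat \<Rightarrow> (nat \<Rightarrow> nat) \<Rightarrow> nat \<Rightarrow> nat" where
  "Mfun p \<Phi> m = (\<Sum>i\<in>{\<Phi> (tau p \<Phi> m - 1) + 1 .. \<Phi> (tau p \<Phi> m)}. nat_digit p m i * p ^ i)"

definition Bfun :: "nat \<Rightarrow> (nat \<Rightarrow> nat) \<Rightarrow> ((nat \<Rightarrow> int) \<Rightarrow> (nat \<Rightarrow> int)) \<Rightarrow> nat \<Rightarrow> (nat \<Rightarrow> int)" where
  "Bfun p \<Phi> f m =
     (if m < p ^ (1 + \<Phi> 0) then f (zp_of_int p (int m))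
      else zp_sub p (f (zp_of_int p (int m))) (f (zp_of_int p (int (m - Mfun p \<Phi> m)))))"

definition bfun :: "nat \<Rightarrow> (nat \<Rightarrow> nat) \<Rightarrow> ((nat \<Rightarrow> int) \<Rightarrow> (nat \<Rightarrow> int)) \<Rightarrow> nat \<Rightarrow> (nat \<Rightarrow> int)" where
  "bfun p \<Phi> f m = zp_shift p (tau p \<Phi> m) (Bfun p \<Phi> f m)"

text \<open>rho(x;j), with the convention Phi(-1) = -1.\<close>
definition rho :: "nat \<Rightarrow> (nat \<Rightarrow> nat) \<Rightarrow> (nat \<Rightarrow> int) \<Rightarrow> nat \<Rightarrow> nat" where
  "rho p \<Phi> x j =
     (let lo = (if j = 0 then 0 else 1 + \<Phi> (j - 1))
      in (\<Sum>i\<in>{lo .. \<Phi> j}. zp_digit p x i * p ^ i) div p ^ lo)"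

end

theory Submission
  imports Defs
begin

text \<open>Write \<open>q\<^sub>n = p^(1+\<Phi> n)\<close>. Suppose \<open>x < q\<^sub>n\<close>, \<open>x \<equiv> u\<close>, is a root of \<open>f\<close> modulo
  \<open>p^(h+n+1)\<close>, and let \<open>d\<close> be the next p-adic digit of \<open>f(x)\<close>. For \<open>i \<in> S(n)\<close> the block
  \<open>x + i q\<^sub>n\<close> has \<open>\<tau> = n+1\<close> and \<open>M = i q\<^sub>n\<close>, so \<open>f(x + i q\<^sub>n) \<equiv> f(x) + p^(n+1) b(x + i q\<^sub>n)\<close>,
  and \<open>x + i q\<^sub>n\<close> is a root modulo \<open>p^(h+n+2)\<close> iff \<open>b(x + i q\<^sub>n) \<equiv> (p - d) p^h\<close>. Since
  \<open>i \<mapsto> b(x + i q\<^sub>n) mod p^(h+1)\<close> is a bijection from \<open>S(n)\<close> onto the nonzero multiples of \<open>p^h\<close>,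
  exactly one \<open>i \<in> {0} \<union> S(n)\<close> lifts the root (namely \<open>i = 0\<close> iff \<open>d = 0\<close>). Iterating from \<open>u\<close>
  yields a coherent sequence of approximations, i.e. a root \<open>\<xi>\<close>.

  If moreover \<open>b(m) \<equiv> 0 (mod p^h)\<close>, each block step leaves \<open>f\<close> unchanged modulo \<open>p^(h+n+1)\<close>, so
  the truncations of every root with properties (a)--(c) are again such approximate roots; the
  uniqueness of each lift then forces any two of them to agree.\<close>

lemma zp_nonneg: "x \<in> zp p \<Longrightarrow> 0 \<le> x k"
  and zp_less: "x \<in> zp p \<Longrightarrow> x k < int p ^ k"
  unfolding zp_def by auto

lemma zp_mod_power:
  assumes "x \<in> zp p" "k \<le> K"
  shows "x K mod int p ^ k = x k"
  using assms(2)
proof (induction K rule: dec_induct)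
  case base
  then show ?case using zp_nonneg[OF assms(1)] zp_less[OF assms(1)] by simp
next
  case (step K)
  have "x (Suc K) mod int p ^ K = x K" using assms(1) unfolding zp_def by auto
  moreover have "int p ^ k dvd int p ^ K" using step(1) by (simp add: le_imp_power_dvd)
  ultimately show ?case using step(3) by (metis mod_mod_cancel)
qed

lemma zp_eq_zero_below: "x \<in> zp p \<Longrightarrow> x K = 0 \<Longrightarrow> k \<le> K \<Longrightarrow> x k = 0"
  using zp_mod_power by fastforce

lemma zp_eqI:
  assumes "x \<in> zp p" "y \<in> zp p" "\<And>k. k \<le> e k" "\<And>k. x (e k) = y (e k)"
  shows "x = y"
proof
  fix k
  show "x k = y k"
    using zp_mod_power[OF assms(1) assms(3)] zp_mod_power[OF assms(2) assms(3)] assms(4) by metis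
qed

lemma zp_of_int_in_zp: "p > 0 \<Longrightarrow> zp_of_int p m \<in> zp p"
  unfolding zp_def zp_of_int_def by (auto simp: mod_mod_cancel le_imp_power_dvd)

lemma zp_of_int_nat: "zp_of_int p (int m) k = int (m mod p ^ k)"
  unfolding zp_of_int_def by (simp add: of_nat_mod)

lemma zp_limit_exists:
  fixes a e :: "nat \<Rightarrow> nat"
  assumes "p > 0" "mono e" "\<And>k. k \<le> e k"
    and "\<And>k. a k < p ^ e k" "\<And>k. a (Suc k) mod p ^ e k = a k"
  shows "\<exists>\<xi>\<in>zp p. \<forall>k. \<xi> (e k) = int (a k)"
proof -
  have coh: "a k' mod p ^ e k = a k" if "k \<le> k'" for k k'
    using that
  proof (induction k' rule: dec_induct)
    case base then show ?case using assms(4) by simp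
  next
    case (step k')
    have "p ^ e k dvd p ^ e k'" using \<open>mono e\<close> step(1) by (simp add: le_imp_power_dvd monoD)
    then show ?case using assms(5)[of k'] step(3) by (metis mod_mod_cancel)
  qed
  define \<xi> where "\<xi> k = int (a k mod p ^ k)" for k
  have "\<xi> \<in> zp p"
    unfolding zp_def
  proof (intro CollectI allI conjI)
    fix k
    show "0 \<le> \<xi> k" "\<xi> k < int p ^ k"
      unfolding \<xi>_def using \<open>p > 0\<close> by (simp_all flip: of_nat_power)
    have "a (Suc k) mod p ^ Suc k mod p ^ k = a (Suc k) mod p ^ e k mod p ^ k"
      using assms(3)[of k] by (simp add: mod_mod_cancel le_imp_power_dvd)
    then show "\<xi> (Suc k) mod int p ^ k = \<xi> k"
      unfolding \<xi>_def using assms(5)[of k] by (simp flip: of_nat_power of_nat_mod)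
  qed
  moreover have "\<xi> (e k) = int (a k)" for k
    unfolding \<xi>_def using coh[OF assms(3)] by simp
  ultimately show ?thesis by blast
qed

lemma zp_digit_sum:
  assumes "x \<in> zp p" "p > 0" "a \<le> c"
  shows "int (\<Sum>i\<in>{a..<c}. zp_digit p x i * p ^ i) = x c - x a"
  using assms(3)
proof (induction c rule: dec_induct)
  case base then show ?case by simp
next
  case (step c)
  have "x (Suc c) mod int p ^ c = x c" using zp_mod_power[OF assms(1)] by simp
  moreover have "x (Suc c) div int p ^ c \<ge> 0"
    using zp_nonneg[OF assms(1)] assms(2) by (simp add: pos_imp_zdiv_nonneg_iff)
  ultimately have "int (zp_digit p x c) * int p ^ c = x (Suc c) - x c"
    unfolding zp_digit_def by (metis minus_mod_eq_mult_div mult.commute nat_0_le)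
  then show ?case using step by simp
qed

lemma zp_nat_less: "x \<in> zp p \<Longrightarrow> nat (x k) < p ^ k"
  using zp_less[of x p k] zp_nonneg[of x p k] by (simp add: nat_less_iff flip: of_nat_power)

lemma rho_Suc:
  assumes "x \<in> zp p" "p > 0" "strict_mono \<Phi>"
  shows "nat (x (1 + \<Phi> (Suc n))) = nat (x (1 + \<Phi> n)) + rho p \<Phi> x (Suc n) * p ^ (1 + \<Phi> n)"
proof -
  let ?a = "1 + \<Phi> n" and ?c = "1 + \<Phi> (Suc n)"
  have ac: "?a \<le> ?c" using assms(3) by (simp add: strict_mono_less_eq)
  define s where "s = (\<Sum>i\<in>{?a..<?c}. zp_digit p x i * p ^ i)"
  have s: "int s = x ?c - x ?a" unfolding s_def using zp_digit_sum[OF assms(1,2) ac] .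
  have "int p ^ ?a dvd x ?c - x ?a"
    using zp_mod_power[OF assms(1) ac] by (metis mod_eq_dvd_iff mod_mod_trivial)
  then have "p ^ ?a dvd s" using s by (metis int_dvd_int_iff of_nat_power)
  moreover have "rho p \<Phi> x (Suc n) = s div p ^ ?a"
    unfolding rho_def s_def Let_def by (simp add: atLeastLessThanSuc_atLeastAtMost)
  ultimately have "rho p \<Phi> x (Suc n) * p ^ ?a = s" by simp
  then show ?thesis using s zp_nonneg[OF assms(1), of ?a] by linarith
qed

lemma classF_in_zp: "classF p \<Phi> f \<Longrightarrow> x \<in> zp p \<Longrightarrow> f x \<in> zp p"
  unfolding classF_def by auto

lemma classF_cong:
  assumes "classF p \<Phi> f" "x \<in> zp p" "y \<in> zp p" "x (1 + \<Phi> n) = y (1 + \<Phi> n)"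
  shows "f x (Suc n) = f y (Suc n)"
  using assms unfolding classF_def by (metis diff_Suc_1 zero_less_Suc)

lemma classF_truncate:
  assumes "classF p \<Phi> f" "p > 0" "x \<in> zp p"
  shows "f x (Suc n) = f (zp_of_int p (x (1 + \<Phi> n))) (Suc n)"
proof (rule classF_cong[OF assms(1,3)])
  show "zp_of_int p (x (1 + \<Phi> n)) \<in> zp p" using assms(2) by (rule zp_of_int_in_zp)
  show "x (1 + \<Phi> n) = zp_of_int p (x (1 + \<Phi> n)) (1 + \<Phi> n)"
    unfolding zp_of_int_def using zp_nonneg[OF assms(3), of "1 + \<Phi> n"] zp_less[OF assms(3), of "1 + \<Phi> n"] by simp
qed

lemma nat_digit_sum:
  assumes "a \<le> c"
  shows "(\<Sum>i\<in>{a..<c}. nat_digit p m i * p ^ i) + m mod p ^ a = m mod p ^ c"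
  using assms
proof (induction c rule: dec_induct)
  case base then show ?case by simp
next
  case (step c)
  have "m mod p ^ Suc c = p ^ c * (m div p ^ c mod p) + m mod p ^ c"
    by (metis mod_mult2_eq power_Suc2)
  then show ?case using step by (simp add: nat_digit_def algebra_simps)
qed

lemma block_decomposition:
  fixes \<Phi> :: "nat \<Rightarrow> nat"
  assumes "p > 1" "strict_mono \<Phi>"
    and x: "x < p ^ (1 + \<Phi> n)" and i: "0 < i" "i < p ^ (\<Phi> (Suc n) - \<Phi> n)"
    and m: "m = x + i * p ^ (1 + \<Phi> n)"
  shows "tau p \<Phi> m = Suc n" "m - Mfun p \<Phi> m = x"
    "p ^ (1 + \<Phi> n) \<le> m" "m < p ^ (1 + \<Phi> (Suc n))"
proof -
  let ?q = "p ^ (1 + \<Phi> n)"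
  have lt: "\<Phi> n < \<Phi> (Suc n)" using \<open>strict_mono \<Phi>\<close> by (simp add: strict_mono_def)
  show ge: "?q \<le> m" using m i(1) by (simp add: trans_le_add2)
  have "m < ?q * (1 + i)" using m x by (simp add: algebra_simps)
  also have "\<dots> \<le> ?q * p ^ (\<Phi> (Suc n) - \<Phi> n)" using i(2) by (intro mult_le_mono2) simp
  also have "\<dots> = p ^ (1 + \<Phi> (Suc n))" using lt by (simp flip: power_add)
  finally show lt2: "m < p ^ (1 + \<Phi> (Suc n))" .
  show tau: "tau p \<Phi> m = Suc n" unfolding tau_def
  proof (rule Least_equality)
    fix y assume "m < p ^ (1 + \<Phi> y)"
    then have "\<not> p ^ (1 + \<Phi> y) \<le> ?q" using ge by linarith
    then show "Suc n \<le> y" using assms(1,2) by (simp add: strict_mono_less_eq)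
  qed (rule lt2)
  have "{\<Phi> n + 1..\<Phi> (Suc n)} = {1 + \<Phi> n..<1 + \<Phi> (Suc n)}" by auto
  then have "Mfun p \<Phi> m + m mod ?q = m mod p ^ (1 + \<Phi> (Suc n))"
    unfolding Mfun_def tau using nat_digit_sum[of "1 + \<Phi> n" "1 + \<Phi> (Suc n)" p m] lt by simp
  also have "\<dots> = m" using lt2 by simp
  finally have "Mfun p \<Phi> m + m mod ?q = m" .
  moreover have "m mod ?q = x" using m x by simp
  ultimately show "m - Mfun p \<Phi> m = x" by (metis add_diff_cancel_left')
qed

lemma f_block_expansion:
  assumes "p > 1" "strict_mono \<Phi>" "classF p \<Phi> f"
    and "x < p ^ (1 + \<Phi> n)" "0 < i" "i < p ^ (\<Phi> (Suc n) - \<Phi> n)"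
    and m: "m = x + i * p ^ (1 + \<Phi> n)"
  shows "f (zp_of_int p (int m)) (j + Suc n)
      = (f (zp_of_int p (int x)) (j + Suc n) + int p ^ Suc n * bfun p \<Phi> f m j) mod int p ^ (j + Suc n)"
proof -
  note block = block_decomposition[OF assms(1,2,4-7)]
  let ?K = "j + Suc n" and ?a = "f (zp_of_int p (int m))" and ?c = "f (zp_of_int p (int x))"
  have inz: "zp_of_int p (int y) \<in> zp p" for y using assms(1) by (simp add: zp_of_int_in_zp)
  have az: "?a \<in> zp p" and cz: "?c \<in> zp p" using classF_in_zp[OF assms(3) inz] by auto
  have "p ^ (1 + \<Phi> 0) \<le> p ^ (1 + \<Phi> n)"
    using assms(1,2) by (simp add: strict_mono_less_eq)
  then have "\<not> m < p ^ (1 + \<Phi> 0)" using block(3) by linarith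
  then have "Bfun p \<Phi> f m = zp_sub p ?a ?c" unfolding Bfun_def using block(2) by simp
  then have B: "Bfun p \<Phi> f m ?K = (?a ?K - ?c ?K) mod int p ^ ?K" unfolding zp_sub_def by simp
  have "m mod p ^ (1 + \<Phi> n) = x" using m assms(4) by simp
  then have "zp_of_int p (int m) (1 + \<Phi> n) = zp_of_int p (int x) (1 + \<Phi> n)"
    using assms(4) by (simp only: zp_of_int_nat mod_less)
  then have "?a (Suc n) = ?c (Suc n)" using classF_cong[OF assms(3) inz inz] by blast
  then have "?a ?K mod int p ^ Suc n = ?c ?K mod int p ^ Suc n"
    using zp_mod_power[OF az, of "Suc n" ?K] zp_mod_power[OF cz, of "Suc n" ?K] by simp
  then have "int p ^ Suc n dvd ?a ?K - ?c ?K" by (simp add: mod_eq_dvd_iff)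
  moreover have "int p ^ Suc n dvd int p ^ ?K" by (simp add: le_imp_power_dvd)
  ultimately have "int p ^ Suc n dvd Bfun p \<Phi> f m ?K" unfolding B by (rule dvd_mod)
  moreover have "bfun p \<Phi> f m j = Bfun p \<Phi> f m ?K div int p ^ Suc n"
    unfolding bfun_def zp_shift_def block(1) by simp
  ultimately have "int p ^ Suc n * bfun p \<Phi> f m j = Bfun p \<Phi> f m ?K" by simp
  then have "(?c ?K + int p ^ Suc n * bfun p \<Phi> f m j) mod int p ^ ?K = ?a ?K mod int p ^ ?K"
    using B by (simp add: mod_add_right_eq)
  then show ?thesis using zp_nonneg[OF az, of ?K] zp_less[OF az, of ?K] by simp
qed

lemma digit_sum_mod_eq_0_iff:
  fixes P d j :: int
  assumes "P > 1" "0 \<le> d" "d < P" "1 \<le> j" "j \<le> P - 1"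
  shows "(P ^ K * d + P ^ K * j) mod P ^ Suc K = 0 \<longleftrightarrow> j = P - d"
proof -
  have "(P ^ K * d + P ^ K * j) mod P ^ Suc K = P ^ K * ((d + j) mod P)"
    by (simp add: mult.commute distrib_right flip: mod_mult_mult1 distrib_left)
  moreover have "(d + j) mod P = 0 \<longleftrightarrow> d + j = P"
  proof
    assume "(d + j) mod P = 0"
    then obtain k where k: "d + j = P * k" by (metis mod_0_imp_dvd dvd_def)
    then have "0 < P * k" "P * k < P * 2" using assms by linarith+
    then have "k = 1" using assms(1) by (simp add: zero_less_mult_iff)
    then show "d + j = P" using k by simp
  qed simp
  ultimately show ?thesis using assms(1) by auto
qed

locale digit_lifting =
  fixes p :: nat and \<Phi> :: "nat \<Rightarrow> nat" and f :: "(nat \<Rightarrow> int) \<Rightarrow> (nat \<Rightarrow> int)"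
    and h n0 u :: nat and S :: "nat \<Rightarrow> nat set"
  assumes p_prime: "prime p"
    and \<Phi>_strict_mono: "strict_mono \<Phi>"
    and f_classF: "classF p \<Phi> f"
    and S_bounds: "\<forall>n\<ge>n0. S n \<subseteq> {0<..<p ^ (\<Phi> (n + 1) - \<Phi> n)} \<and> card (S n) = p - 1"
    and bfun_image: "\<forall>n m. n \<ge> n0 \<and> m < p ^ (1 + \<Phi> n) \<and> m mod p ^ (1 + \<Phi> n0) = u mod p ^ (1 + \<Phi> n0) \<longrightarrow>
           (\<lambda>i. bfun p \<Phi> f (m + i * p ^ (1 + \<Phi> n)) (h + 1)) ` S n
           = (\<lambda>i. (int i * int p ^ h) mod int p ^ (h + 1)) ` {1 .. p - 1}"
begin

lemma p_gt_1: "p > 1"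
  using p_prime prime_gt_1_nat by blast

lemma zp_of_int_mem_zp: "zp_of_int p m \<in> zp p"
  using p_gt_1 by (simp add: zp_of_int_in_zp)

definition approx_root :: "nat \<Rightarrow> nat \<Rightarrow> bool" where
  "approx_root n x \<longleftrightarrow> x < p ^ (1 + \<Phi> n) \<and> x mod p ^ (1 + \<Phi> n0) = u mod p ^ (1 + \<Phi> n0)
     \<and> f (zp_of_int p (int x)) (Suc (h + n)) = 0"

definition admissible_root :: "(nat \<Rightarrow> int) \<Rightarrow> bool" where
  "admissible_root \<xi> \<longleftrightarrow> \<xi> \<in> zp p \<and> f \<xi> = zp_zero
     \<and> \<xi> (1 + \<Phi> n0) = int u mod int p ^ (1 + \<Phi> n0)
     \<and> (\<forall>n\<ge>n0. rho p \<Phi> \<xi> (n + 1) \<in> insert 0 (S n))"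

lemma S_mem_bounds:
  assumes "n \<ge> n0" "i \<in> S n"
  shows "0 < i" "i < p ^ (\<Phi> (Suc n) - \<Phi> n)"
proof -
  have "i \<in> {0<..<p ^ (\<Phi> (n + 1) - \<Phi> n)}" using S_bounds assms by blast
  then show "0 < i" "i < p ^ (\<Phi> (Suc n) - \<Phi> n)" by auto
qed

lemma power_\<Phi>_dvd: "n0 \<le> n \<Longrightarrow> p ^ (1 + \<Phi> n0) dvd p ^ (1 + \<Phi> n)"
  using \<Phi>_strict_mono by (simp add: le_imp_power_dvd strict_mono_less_eq)

lemma block_step_mod:
  assumes "n0 \<le> n"
  shows "(x + i * p ^ (1 + \<Phi> n)) mod p ^ (1 + \<Phi> n0) = x mod p ^ (1 + \<Phi> n0)"
proof -
  obtain k where "p ^ (1 + \<Phi> n) = p ^ (1 + \<Phi> n0) * k" using power_\<Phi>_dvd[OF assms] ..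
  then have "x + i * p ^ (1 + \<Phi> n) = x + (i * k) * p ^ (1 + \<Phi> n0)" by (simp add: ac_simps)
  then show ?thesis by (simp only: mod_mult_self1)
qed

lemma bfun_bij:
  assumes "n0 \<le> n" "x < p ^ (1 + \<Phi> n)" "x mod p ^ (1 + \<Phi> n0) = u mod p ^ (1 + \<Phi> n0)"
  shows "bij_betw (\<lambda>i. bfun p \<Phi> f (x + i * p ^ (1 + \<Phi> n)) (h + 1)) (S n)
           ((\<lambda>j. int j * int p ^ h) ` {1..p - 1})"
proof -
  have small: "int j * int p ^ h mod int p ^ (h + 1) = int j * int p ^ h" if "j \<in> {1..p - 1}" for j
  proof -
    have "int j < int p" using that p_gt_1 by auto
    then show ?thesis by (simp add: mult.commute)
  qed
  have "(\<lambda>i. bfun p \<Phi> f (x + i * p ^ (1 + \<Phi> n)) (h + 1)) ` S n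
      = (\<lambda>j. int j * int p ^ h mod int p ^ (h + 1)) ` {1..p - 1}"
    using bfun_image assms by blast
  also have "\<dots> = (\<lambda>j. int j * int p ^ h) ` {1..p - 1}"
    using small by (rule image_cong[OF refl])
  finally have image: "(\<lambda>i. bfun p \<Phi> f (x + i * p ^ (1 + \<Phi> n)) (h + 1)) ` S n
      = (\<lambda>j. int j * int p ^ h) ` {1..p - 1}" .
  have "inj_on (\<lambda>j. int j * int p ^ h) {1..p - 1}"
    using p_gt_1 by (intro inj_onI) simp
  then have "card ((\<lambda>j. int j * int p ^ h) ` {1..p - 1}) = card (S n)"
    using S_bounds assms(1) by (simp add: card_image)
  moreover have "finite (S n)"
    using S_bounds assms(1) p_gt_1 by (metis card.infinite less_numeral_extra(3) zero_less_diff)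
  ultimately show ?thesis
    using image by (metis bij_betw_def eq_card_imp_inj_on)
qed

lemma approx_root_next_digit:
  assumes "approx_root n x"
  obtains d where "0 \<le> d" "d < int p"
    "f (zp_of_int p (int x)) (Suc (Suc (h + n))) = int p ^ Suc (h + n) * d"
proof -
  let ?K = "Suc (h + n)"
  define c where "c = f (zp_of_int p (int x)) (Suc ?K)"
  have fx_zp: "f (zp_of_int p (int x)) \<in> zp p" by (rule classF_in_zp[OF f_classF zp_of_int_mem_zp])
  have "c mod int p ^ ?K = 0"
    using assms zp_mod_power[OF fx_zp, of ?K "Suc ?K"] unfolding c_def approx_root_def by simp
  then have c: "c = int p ^ ?K * (c div int p ^ ?K)" by (metis add_0_right mult_div_mod_eq)
  have c_bounds: "0 \<le> c" "c < int p ^ ?K * int p"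
    unfolding c_def using zp_nonneg[OF fx_zp] zp_less[OF fx_zp, of "Suc ?K"] by (simp_all add: mult.commute)
  have "0 \<le> c div int p ^ ?K" using c_bounds(1) p_gt_1 by (simp add: pos_imp_zdiv_nonneg_iff)
  moreover have "int p ^ ?K * (c div int p ^ ?K) < int p ^ ?K * int p" using c c_bounds(2) by simp
  then have "c div int p ^ ?K < int p" using p_gt_1 by (simp add: mult_less_cancel_left_pos)
  ultimately show ?thesis using that c unfolding c_def by blast
qed

lemma block_root_iff:
  assumes n: "n0 \<le> n" and x: "approx_root n x" and i: "i \<in> S n"
    and d: "0 \<le> d" "d < int p" "f (zp_of_int p (int x)) (Suc (Suc (h + n))) = int p ^ Suc (h + n) * d"
  shows "f (zp_of_int p (int (x + i * p ^ (1 + \<Phi> n)))) (Suc (Suc (h + n))) = 0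
    \<longleftrightarrow> bfun p \<Phi> f (x + i * p ^ (1 + \<Phi> n)) (h + 1) = (int p - d) * int p ^ h"
proof -
  let ?K = "Suc (h + n)" and ?b = "bfun p \<Phi> f (x + i * p ^ (1 + \<Phi> n)) (h + 1)"
  have x_less: "x < p ^ (1 + \<Phi> n)" and x_mod: "x mod p ^ (1 + \<Phi> n0) = u mod p ^ (1 + \<Phi> n0)"
    using x unfolding approx_root_def by auto
  obtain j where j: "j \<in> {1..p - 1}" "?b = int j * int p ^ h"
    using bij_betw_apply[OF bfun_bij[OF n x_less x_mod] i] by auto
  have "f (zp_of_int p (int (x + i * p ^ (1 + \<Phi> n)))) (h + 1 + Suc n)
      = (f (zp_of_int p (int x)) (h + 1 + Suc n) + int p ^ Suc n * ?b) mod int p ^ (h + 1 + Suc n)"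
    by (rule f_block_expansion[OF p_gt_1 \<Phi>_strict_mono f_classF x_less S_mem_bounds[OF n i] refl])
  also have "\<dots> = (int p ^ ?K * d + int p ^ ?K * int j) mod int p ^ Suc ?K"
    using d(3) j(2) by (simp add: power_add ac_simps)
  finally have "f (zp_of_int p (int (x + i * p ^ (1 + \<Phi> n)))) (Suc ?K) = 0 \<longleftrightarrow> int j = int p - d"
    using digit_sum_mod_eq_0_iff[of "int p" d "int j" ?K] p_gt_1 d j(1) by auto
  then show ?thesis using j(2) p_gt_1 by simp
qed

lemma root_lift_unique:
  assumes n: "n0 \<le> n" and x: "approx_root n x"
  shows "\<exists>!i. i \<in> insert 0 (S n)
           \<and> f (zp_of_int p (int (x + i * p ^ (1 + \<Phi> n)))) (Suc (Suc (h + n))) = 0"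
proof -
  let ?q = "p ^ (1 + \<Phi> n)" and ?K = "Suc (h + n)"
  let ?b = "\<lambda>i. bfun p \<Phi> f (x + i * ?q) (h + 1)" and ?T = "(\<lambda>j. int j * int p ^ h) ` {1..p - 1}"
  obtain d where d: "0 \<le> d" "d < int p" "f (zp_of_int p (int x)) (Suc ?K) = int p ^ ?K * d"
    using approx_root_next_digit[OF x] .
  have bij: "bij_betw ?b (S n) ?T"
    using bfun_bij[OF n] x unfolding approx_root_def by blast
  have root_0: "f (zp_of_int p (int (x + 0 * ?q))) (Suc ?K) = 0 \<longleftrightarrow> d = 0"
    using d(3) p_gt_1 by simp
  note root_S = block_root_iff[OF n x _ d]
  show ?thesis
  proof (cases "d = 0")
    case True
    have no_root: "f (zp_of_int p (int (x + i * ?q))) (Suc ?K) \<noteq> 0" if "i \<in> S n" for i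
    proof -
      have "?b i \<in> ?T" using bij_betw_apply[OF bij that] .
      then have "?b i < int p * int p ^ h" using p_gt_1 by auto
      then show ?thesis using root_S[OF that] True by simp
    qed
    show ?thesis
    proof (rule ex1I[of _ 0])
      fix i
      assume "i \<in> insert 0 (S n) \<and> f (zp_of_int p (int (x + i * ?q))) (Suc ?K) = 0"
      then show "i = 0" using no_root by blast
    qed (use True root_0 in simp)
  next
    case False
    have "(int p - d) * int p ^ h \<in> ?T"
    proof (rule image_eqI)
      have "int (nat (int p - d)) = int p - d" using d(2) by (intro nat_0_le) linarith
      from sym[OF this] show "(int p - d) * int p ^ h = int (nat (int p - d)) * int p ^ h"
        by (rule arg_cong)
      show "nat (int p - d) \<in> {1..p - 1}" using False d by auto
    qed
    then obtain i where i: "i \<in> S n" "(int p - d) * int p ^ h = ?b i"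
      unfolding bij_betw_imp_surj_on[OF bij, symmetric] by (rule imageE)
    have "i' = i" if "i' \<in> S n" "?b i' = (int p - d) * int p ^ h" for i'
      using inj_onD[OF bij_betw_imp_inj_on[OF bij]] i that by simp
    then show ?thesis
      using False root_0 root_S i by (intro ex1I[of _ i]) auto
  qed
qed

lemma approx_root_Suc:
  assumes n: "n0 \<le> n" and x: "approx_root n x" and i: "i \<in> insert 0 (S n)"
    and root: "f (zp_of_int p (int (x + i * p ^ (1 + \<Phi> n)))) (Suc (Suc (h + n))) = 0"
  shows "approx_root (Suc n) (x + i * p ^ (1 + \<Phi> n))"
proof -
  have x_less: "x < p ^ (1 + \<Phi> n)" using x unfolding approx_root_def by simp
  have "x + i * p ^ (1 + \<Phi> n) < p ^ (1 + \<Phi> (Suc n))"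
  proof (cases "i = 0")
    case True
    have "p ^ (1 + \<Phi> n) \<le> p ^ (1 + \<Phi> (Suc n))"
      using p_gt_1 \<Phi>_strict_mono by (simp add: strict_mono_less_eq)
    then show ?thesis using True x_less by (metis add_0_right mult_zero_left order_less_le_trans)
  next
    case False
    then show ?thesis
      using block_decomposition(4)[OF p_gt_1 \<Phi>_strict_mono x_less S_mem_bounds[OF n] refl] i by auto
  qed
  then show ?thesis
    using x root block_step_mod[OF n] unfolding approx_root_def by simp
qed

lemma approx_root_chain:
  assumes "approx_root n0 u"
  obtains xs i where "xs 0 = u" "\<And>k. approx_root (n0 + k) (xs k)"
    "\<And>k. i k \<in> insert 0 (S (n0 + k))"
    "\<And>k. xs (Suc k) = xs k + i k * p ^ (1 + \<Phi> (n0 + k))"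
proof -
  define lift where "lift n x = (THE i. i \<in> insert 0 (S n)
      \<and> f (zp_of_int p (int (x + i * p ^ (1 + \<Phi> n)))) (Suc (Suc (h + n))) = 0)" for n x
  have lift: "lift n x \<in> insert 0 (S n)
      \<and> f (zp_of_int p (int (x + lift n x * p ^ (1 + \<Phi> n)))) (Suc (Suc (h + n))) = 0"
    if "n0 \<le> n" "approx_root n x" for n x
    unfolding lift_def by (rule theI'[OF root_lift_unique[OF that]])
  define xs where "xs = rec_nat u (\<lambda>k x. x + lift (n0 + k) x * p ^ (1 + \<Phi> (n0 + k)))"
  have xs_Suc: "xs (Suc k) = xs k + lift (n0 + k) (xs k) * p ^ (1 + \<Phi> (n0 + k))" for k
    by (simp add: xs_def)
  have approx: "approx_root (n0 + k) (xs k)" for k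
  proof (induction k)
    case 0
    then show ?case using assms by (simp add: xs_def)
  next
    case (Suc k)
    have "n0 \<le> n0 + k" by simp
    note step = lift[OF this Suc.IH]
    show ?case using approx_root_Suc[OF _ Suc.IH conjunct1[OF step] conjunct2[OF step]] xs_Suc[of k] by simp
  qed
  show ?thesis
  proof (rule that[of xs "\<lambda>k. lift (n0 + k) (xs k)"])
    show "xs 0 = u" by (simp add: xs_def)
    show "lift (n0 + k) (xs k) \<in> insert 0 (S (n0 + k))" for k
      using lift[OF _ approx[of k]] by simp
  qed (fact approx xs_Suc)+
qed

lemma admissible_root_exists:
  assumes "approx_root n0 u"
  shows "\<exists>\<xi>. admissible_root \<xi>"
proof -
  obtain xs i where xs_0: "xs 0 = u" and approx: "\<And>k. approx_root (n0 + k) (xs k)"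
    and i: "\<And>k. i k \<in> insert 0 (S (n0 + k))"
    and xs_Suc: "\<And>k. xs (Suc k) = xs k + i k * p ^ (1 + \<Phi> (n0 + k))"
    using approx_root_chain[OF assms] by blast
  have xs_less: "xs k < p ^ (1 + \<Phi> (n0 + k))" for k
    using approx[of k] unfolding approx_root_def by simp
  have "mono (\<lambda>k. 1 + \<Phi> (n0 + k))"
    using \<Phi>_strict_mono by (intro monoI) (simp add: strict_mono_less_eq)
  moreover have "k \<le> 1 + \<Phi> (n0 + k)" for k
    using strict_mono_imp_increasing[OF \<Phi>_strict_mono, of "n0 + k"] by simp
  moreover have "xs (Suc k) mod p ^ (1 + \<Phi> (n0 + k)) = xs k" for k
    using xs_Suc[of k] xs_less[of k] by simp
  ultimately obtain \<xi> where \<xi>: "\<xi> \<in> zp p" "\<And>k. \<xi> (1 + \<Phi> (n0 + k)) = int (xs k)"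
    using zp_limit_exists[of p "\<lambda>k. 1 + \<Phi> (n0 + k)" xs] p_gt_1 xs_less by auto
  have "f \<xi> k = 0" for k
  proof -
    have "f (zp_of_int p (int (xs k))) (Suc (h + (n0 + k))) = 0"
      using approx[of k] unfolding approx_root_def by simp
    then have "f (zp_of_int p (int (xs k))) (Suc (n0 + k)) = 0"
      by (rule zp_eq_zero_below[OF classF_in_zp[OF f_classF zp_of_int_mem_zp]]) simp
    then have "f \<xi> (Suc (n0 + k)) = 0"
      using classF_truncate[OF f_classF _ \<xi>(1), of "n0 + k"] p_gt_1 \<xi>(2) by simp
    then show ?thesis by (rule zp_eq_zero_below[OF classF_in_zp[OF f_classF \<xi>(1)]]) simp
  qed
  then have "f \<xi> = zp_zero" by (auto simp: zp_zero_def)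
  moreover have "\<xi> (1 + \<Phi> n0) = int u mod int p ^ (1 + \<Phi> n0)"
  proof -
    have "u < p ^ (1 + \<Phi> n0)" using assms unfolding approx_root_def by simp
    then have "int u < int p ^ (1 + \<Phi> n0)" by (metis of_nat_less_iff of_nat_power)
    then show ?thesis using \<xi>(2)[of 0] xs_0 by simp
  qed
  moreover have "rho p \<Phi> \<xi> (n + 1) \<in> insert 0 (S n)" if "n0 \<le> n" for n
  proof -
    obtain k where k: "n = n0 + k" using \<open>n0 \<le> n\<close> le_Suc_ex by blast
    have "xs (Suc k) = xs k + rho p \<Phi> \<xi> (Suc n) * p ^ (1 + \<Phi> n)"
      using rho_Suc[OF \<xi>(1) _ \<Phi>_strict_mono, of n] p_gt_1 \<xi>(2)[of k] \<xi>(2)[of "Suc k"] k by simp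
    then have "rho p \<Phi> \<xi> (Suc n) = i k" using xs_Suc[of k] k p_gt_1 by simp
    then show ?thesis using i[of k] k by simp
  qed
  ultimately show ?thesis using \<xi>(1) unfolding admissible_root_def by blast
qed

end

locale digit_lifting_unique = digit_lifting +
  assumes bfun_vanishes: "\<forall>m. m \<ge> p ^ (1 + \<Phi> n0) \<and> m mod p ^ (1 + \<Phi> n0) = u mod p ^ (1 + \<Phi> n0) \<longrightarrow>
              bfun p \<Phi> f m h = 0"
begin

lemma f_block_step_stable:
  assumes N: "n0 \<le> N" and x: "x < p ^ (1 + \<Phi> N)" "x mod p ^ (1 + \<Phi> n0) = u mod p ^ (1 + \<Phi> n0)"
    and i: "i \<in> insert 0 (S N)"
  shows "f (zp_of_int p (int (x + i * p ^ (1 + \<Phi> N)))) (h + Suc N) = f (zp_of_int p (int x)) (h + Suc N)"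
proof (cases "i = 0")
  case False
  then have i: "i \<in> S N" using i by simp
  note block = block_decomposition[OF p_gt_1 \<Phi>_strict_mono x(1) S_mem_bounds[OF N i] refl]
  have "p ^ (1 + \<Phi> n0) \<le> p ^ (1 + \<Phi> N)"
    using N p_gt_1 \<Phi>_strict_mono by (simp add: strict_mono_less_eq)
  then have "p ^ (1 + \<Phi> n0) \<le> x + i * p ^ (1 + \<Phi> N)" using block(3) by linarith
  moreover have "(x + i * p ^ (1 + \<Phi> N)) mod p ^ (1 + \<Phi> n0) = u mod p ^ (1 + \<Phi> n0)"
    using block_step_mod[OF N] x(2) by simp
  ultimately have "bfun p \<Phi> f (x + i * p ^ (1 + \<Phi> N)) h = 0"
    using bfun_vanishes by blast
  moreover have "f (zp_of_int p (int x)) \<in> zp p"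
    by (rule classF_in_zp[OF f_classF zp_of_int_mem_zp])
  ultimately show ?thesis
    using f_block_expansion[OF p_gt_1 \<Phi>_strict_mono f_classF x(1) S_mem_bounds[OF N i] refl, of h]
      zp_nonneg zp_less by (metis add_0_right mod_pos_pos_trivial mult_zero_right)
qed simp

lemma approx_root_of_admissible:
  assumes \<xi>: "admissible_root \<xi>" and n: "n0 \<le> n"
  shows "approx_root n (nat (\<xi> (1 + \<Phi> n)))"
proof -
  define X where "X n = nat (\<xi> (1 + \<Phi> n))" for n
  have \<xi>_zp: "\<xi> \<in> zp p" and f\<xi>: "f \<xi> = zp_zero" and \<xi>_0: "\<xi> (1 + \<Phi> n0) = int u mod int p ^ (1 + \<Phi> n0)"
    and \<xi>_rho: "\<And>n. n0 \<le> n \<Longrightarrow> rho p \<Phi> \<xi> (Suc n) \<in> insert 0 (S n)"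
    using \<xi> unfolding admissible_root_def by auto
  have X: "int (X n) = \<xi> (1 + \<Phi> n)" for n
    unfolding X_def using zp_nonneg[OF \<xi>_zp] by simp
  have X_less: "X n < p ^ (1 + \<Phi> n)" for n
    unfolding X_def by (rule zp_nat_less[OF \<xi>_zp])
  have X_mod: "X n mod p ^ (1 + \<Phi> n0) = u mod p ^ (1 + \<Phi> n0)" if "n0 \<le> n" for n
  proof -
    have "1 + \<Phi> n0 \<le> 1 + \<Phi> n" using that \<Phi>_strict_mono by (simp add: strict_mono_less_eq)
    then have "int (X n mod p ^ (1 + \<Phi> n0)) = int (u mod p ^ (1 + \<Phi> n0))"
      using zp_mod_power[OF \<xi>_zp, of "1 + \<Phi> n0" "1 + \<Phi> n"] \<xi>_0 X by (simp add: of_nat_mod)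
    then show ?thesis by simp
  qed
  have X_Suc: "X (Suc n) = X n + rho p \<Phi> \<xi> (Suc n) * p ^ (1 + \<Phi> n)" for n
    unfolding X_def using rho_Suc[OF \<xi>_zp _ \<Phi>_strict_mono] p_gt_1 by simp
  let ?g = "\<lambda>y. f (zp_of_int p (int y))"
  have stable: "?g (X N) (Suc (h + n)) = ?g (X n) (Suc (h + n))" if "n \<le> N" for N
    using that
  proof (induction N rule: dec_induct)
    case (step N)
    have le: "Suc (h + n) \<le> h + Suc N" using step(1) by simp
    have "?g (X (Suc N)) (Suc (h + n)) = ?g (X (Suc N)) (h + Suc N) mod int p ^ Suc (h + n)"
      using zp_mod_power[OF classF_in_zp[OF f_classF zp_of_int_mem_zp] le] by simp
    also have "\<dots> = ?g (X N) (h + Suc N) mod int p ^ Suc (h + n)"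
      using f_block_step_stable[OF _ X_less X_mod \<xi>_rho] step(1) n unfolding X_Suc by simp
    also have "\<dots> = ?g (X N) (Suc (h + n))"
      using zp_mod_power[OF classF_in_zp[OF f_classF zp_of_int_mem_zp] le] by simp
    finally show ?case using step(3) by simp
  qed simp
  have "f \<xi> (Suc (h + n)) = 0" using f\<xi> by (simp add: zp_zero_def)
  then have "?g (X (h + n)) (Suc (h + n)) = 0"
    using classF_truncate[OF f_classF _ \<xi>_zp] p_gt_1 X by simp
  then show ?thesis
    using stable[of "h + n"] X_less X_mod[OF n] unfolding approx_root_def X_def by simp
qed

lemma admissible_root_unique:
  assumes \<xi>: "admissible_root \<xi>" and \<eta>: "admissible_root \<eta>"
  shows "\<xi> = \<eta>"
proof -
  have zp: "\<xi> \<in> zp p" "\<eta> \<in> zp p"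
    using \<xi> \<eta> unfolding admissible_root_def by auto
  have same: "nat (\<xi> (1 + \<Phi> n)) = nat (\<eta> (1 + \<Phi> n))" if "n0 \<le> n" for n
    using that
  proof (induction n rule: dec_induct)
    case base
    then show ?case using \<xi> \<eta> unfolding admissible_root_def by simp
  next
    case (step n)
    let ?x = "nat (\<xi> (1 + \<Phi> n))" and ?q = "p ^ (1 + \<Phi> n)"
    have root: "rho p \<Phi> \<zeta> (Suc n) \<in> insert 0 (S n)
        \<and> f (zp_of_int p (int (?x + rho p \<Phi> \<zeta> (Suc n) * ?q))) (Suc (Suc (h + n))) = 0"
      if "admissible_root \<zeta>" "\<zeta> \<in> zp p" "nat (\<zeta> (1 + \<Phi> n)) = ?x" for \<zeta>
    proof -
      have "nat (\<zeta> (1 + \<Phi> (Suc n))) = ?x + rho p \<Phi> \<zeta> (Suc n) * ?q"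
        using rho_Suc[OF that(2) _ \<Phi>_strict_mono, of n] p_gt_1 that(3) by simp
      moreover have "approx_root (Suc n) (nat (\<zeta> (1 + \<Phi> (Suc n))))"
        using approx_root_of_admissible[OF that(1)] step(1) by simp
      ultimately show ?thesis using that(1) step(1) unfolding approx_root_def admissible_root_def by simp
    qed
    have "rho p \<Phi> \<xi> (Suc n) = rho p \<Phi> \<eta> (Suc n)"
      using root_lift_unique[OF step(1) approx_root_of_admissible[OF \<xi> step(1)]]
        root[OF \<xi> zp(1) refl] root[OF \<eta> zp(2) step(3)[symmetric]] by blast
    then show ?case
      using rho_Suc[OF zp(1) _ \<Phi>_strict_mono, of n] rho_Suc[OF zp(2) _ \<Phi>_strict_mono, of n] p_gt_1 step(3)
      by simp
  qed
  show ?thesis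
  proof (rule zp_eqI[OF zp])
    show "k \<le> 1 + \<Phi> (n0 + k)" for k
      using strict_mono_imp_increasing[OF \<Phi>_strict_mono, of "n0 + k"] by simp
    show "\<xi> (1 + \<Phi> (n0 + k)) = \<eta> (1 + \<Phi> (n0 + k))" for k
      using same[of "n0 + k"] zp_nonneg[OF zp(1)] zp_nonneg[OF zp(2)] by (simp add: nat_eq_iff2)
  qed
qed

end

theorem theorem2:
  fixes p :: nat and \<Phi> :: "nat \<Rightarrow> nat" and f :: "(nat \<Rightarrow> int) \<Rightarrow> (nat \<Rightarrow> int)"
    and h n0 u :: nat and S :: "nat \<Rightarrow> nat set"
  assumes "prime p"
    and "strict_mono \<Phi>"
    and "classF p \<Phi> f"
    and "u < p ^ (1 + \<Phi> n0)"
    and "f (zp_of_int p (int u)) (1 + h + n0) = 0"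
    and "\<forall>n\<ge>n0. S n \<subseteq> {0<..<p ^ (\<Phi> (n + 1) - \<Phi> n)} \<and> card (S n) = p - 1"
    and "\<forall>n m. n \<ge> n0 \<and> m < p ^ (1 + \<Phi> n) \<and> m mod p ^ (1 + \<Phi> n0) = u mod p ^ (1 + \<Phi> n0) \<longrightarrow>
           (\<lambda>i. bfun p \<Phi> f (m + i * p ^ (1 + \<Phi> n)) (h + 1)) ` S n
           = (\<lambda>i. (int i * int p ^ h) mod int p ^ (h + 1)) ` {1 .. p - 1}"
  shows "(\<exists>\<xi>\<in>zp p. f \<xi> = zp_zero
            \<and> \<xi> (1 + \<Phi> n0) = int u mod int p ^ (1 + \<Phi> n0)
            \<and> (\<forall>n\<ge>n0. rho p \<Phi> \<xi> (n + 1) \<in> insert 0 (S n)))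
       \<and> ((\<forall>m. m \<ge> p ^ (1 + \<Phi> n0) \<and> m mod p ^ (1 + \<Phi> n0) = u mod p ^ (1 + \<Phi> n0) \<longrightarrow>
              bfun p \<Phi> f m h = 0)
          \<longrightarrow> (\<exists>!\<xi>. \<xi> \<in> zp p \<and> f \<xi> = zp_zero
               \<and> \<xi> (1 + \<Phi> n0) = int u mod int p ^ (1 + \<Phi> n0)
               \<and> (\<forall>n\<ge>n0. rho p \<Phi> \<xi> (n + 1) \<in> insert 0 (S n))))"
proof -
  interpret digit_lifting p \<Phi> f h n0 u S
    using assms(1-3,6,7) by unfold_locales
  have "approx_root n0 u"
    using assms(4,5) unfolding approx_root_def by simp
  then obtain \<xi> where \<xi>: "admissible_root \<xi>"
    using admissible_root_exists by blast
  moreover have "\<exists>!\<xi>. admissible_root \<xi>"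
    if "\<forall>m. m \<ge> p ^ (1 + \<Phi> n0) \<and> m mod p ^ (1 + \<Phi> n0) = u mod p ^ (1 + \<Phi> n0) \<longrightarrow>
          bfun p \<Phi> f m h = 0"
  proof -
    interpret digit_lifting_unique p \<Phi> f h n0 u S
      using that by unfold_locales
    show ?thesis using \<xi> admissible_root_unique by blast
  qed
  ultimately show ?thesis unfolding admissible_root_def by blast
qed

end
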